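(* Let $R$ be a finite ring with identity, $\alpha\in(0,1)$, and let $\pi_U$ be the stationary distribution of the Markov chain $(X^U_t)$ on $R$ defined below. Let $n=|R|$ and $m=|U_R|$. Then for every unit $u\in U_R$, \[\pi_U(u)=\frac{\alpha}{n-m+m\alpha}.\]
   Context: $U_R$ is the group of units of $R$. The chain $(X^U_t)$: at each step an independent coin with Heads probability $\alpha$ is tossed; on Heads, $X_{t+1}=X_t+Y$ with $Y$ uniform on $R$; on Tails, $X_{t+1}=Z\cdot X_t$ with $Z$ uniform on $R$ (all independent). *)

theory Defs
  imports Complex_Main
begin

definition ring_units :: "'a::ring_1 set" where
  "ring_units = {u. \<exists>v. u * v = 1 \<and> v * u = 1}"

text \<open>Transition probability of the chain X^U: with probability alpha add a uniform
  Y (giving a uniform next state), with probability 1 - alpha multiply on the left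
  by a uniform Z.\<close>
definition trans_U :: "real \<Rightarrow> 'a::{ring_1,finite} \<Rightarrow> 'a \<Rightarrow> real" where
  "trans_U \<alpha> x y =
     \<alpha> * (1 / real (card (UNIV :: 'a set)))
     + (1 - \<alpha>) * (real (card {z::'a. z * x = y}) / real (card (UNIV :: 'a set)))"

definition stationary_U :: "real \<Rightarrow> ('a::{ring_1,finite} \<Rightarrow> real) \<Rightarrow> bool" where
  "stationary_U \<alpha> \<pi> \<longleftrightarrow>
     (\<forall>x. 0 \<le> \<pi> x) \<and> (\<Sum>x\<in>UNIV. \<pi> x) = 1 \<and>
     (\<forall>y. (\<Sum>x\<in>UNIV. \<pi> x * trans_U \<alpha> x y) = \<pi> y)"

end

theory Submission
  imports Defs
begin

text \<open>On a unit \<open>u\<close> the multiplicative move reaches \<open>u\<close> from \<open>x\<close> in exactly one way if \<open>x\<close>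
  is a unit and in no way otherwise, so the balance equation at \<open>u\<close> reads
  \<open>n \<pi>(u) = \<alpha> + (1 - \<alpha>) \<pi>(U)\<close>. Its right-hand side does not depend on \<open>u\<close>: \<open>\<pi>\<close> is constant
  on the units, \<open>\<pi>(U) = m \<pi>(u)\<close>, and solving the linear equation gives the formula.\<close>

lemma one_in_ring_units: "(1::'a::ring_1) \<in> ring_units"
  unfolding ring_units_def by auto

lemma ring_units_if_left_inverse:
  fixes x w :: "'a::{ring_1,finite}"
  assumes "w * x = 1"
  shows "x \<in> ring_units"
proof -
  have "inj (\<lambda>y. x * y)"
  proof (rule injI)
    fix a b assume "x * a = x * b"
    then have "w * x * a = w * x * b" by (simp add: mult.assoc)
    then show "a = b" using assms by simp
  qed
  then obtain v where v: "x * v = 1"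
    using finite_UNIV_inj_surj[OF finite_UNIV] by (metis surjD)
  have "w = w * x * v" using v by (simp add: mult.assoc)
  then have "v * x = 1" using assms by simp
  then show ?thesis using v unfolding ring_units_def by blast
qed

lemma card_left_factors_of_unit:
  fixes x u :: "'a::{ring_1,finite}"
  assumes "u \<in> ring_units"
  shows "card {z. z * x = u} = (if x \<in> ring_units then 1 else 0)"
proof (cases "x \<in> ring_units")
  case True
  then obtain v where v: "x * v = 1" "v * x = 1" unfolding ring_units_def by blast
  have "z * x = u \<longleftrightarrow> z = u * v" for z
    by (metis mult.assoc mult_1_right v)
  then have "{z. z * x = u} = {u * v}" by blast
  then show ?thesis using True by simp
next
  case False
  obtain w where w: "w * u = 1" using assms unfolding ring_units_def by blast
  have "z * x \<noteq> u" for z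
  proof
    assume "z * x = u"
    then have "(w * z) * x = 1" using w by (simp add: mult.assoc)
    then show False using False ring_units_if_left_inverse by blast
  qed
  then show ?thesis using False by simp
qed

lemma trans_U_to_unit:
  fixes x u :: "'a::{ring_1,finite}"
  assumes "u \<in> ring_units"
  shows "trans_U \<alpha> x u
    = (\<alpha> + (1 - \<alpha>) * (if x \<in> ring_units then 1 else 0)) / real (card (UNIV :: 'a set))"
  unfolding trans_U_def card_left_factors_of_unit[OF assms] by (simp add: add_divide_distrib)

lemma stationary_U_at_unit:
  fixes \<pi> :: "'a::{ring_1,finite} \<Rightarrow> real" and u :: 'a
  assumes "stationary_U \<alpha> \<pi>" and "u \<in> ring_units"
  shows "real (card (UNIV :: 'a set)) * \<pi> u = \<alpha> + (1 - \<alpha>) * (\<Sum>x\<in>ring_units. \<pi> x)"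
proof -
  have total: "(\<Sum>x\<in>UNIV. \<pi> x) = 1"
    and balance: "\<pi> u = (\<Sum>x\<in>UNIV. \<pi> x * trans_U \<alpha> x u)"
    using assms(1) unfolding stationary_U_def by auto
  have "real (card (UNIV :: 'a set)) * \<pi> u
      = (\<Sum>x\<in>UNIV. \<alpha> * \<pi> x + (1 - \<alpha>) * (if x \<in> ring_units then \<pi> x else 0))"
    unfolding balance sum_distrib_left trans_U_to_unit[OF assms(2)]
    by (intro sum.cong) (auto simp: algebra_simps)
  also have "\<dots> = \<alpha> * (\<Sum>x\<in>UNIV. \<pi> x) + (1 - \<alpha>) * (\<Sum>x\<in>ring_units. \<pi> x)"
    by (simp add: sum.distrib sum.If_cases flip: sum_distrib_left)
  finally show ?thesis using total by simp
qed

theorem corollary3p4: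
  fixes \<alpha> :: real and \<pi> :: "'a::{ring_1,finite} \<Rightarrow> real" and u :: 'a
  assumes "0 < \<alpha>" and "\<alpha> < 1"
    and "stationary_U \<alpha> \<pi>"
    and "u \<in> ring_units"
  shows "\<pi> u = \<alpha> / (real (card (UNIV :: 'a set)) - real (card (ring_units :: 'a set))
                     + real (card (ring_units :: 'a set)) * \<alpha>)"
proof -
  define n where "n = real (card (UNIV :: 'a set))"
  define m where "m = real (card (ring_units :: 'a set))"
  have n_pi: "n * \<pi> y = \<alpha> + (1 - \<alpha>) * (\<Sum>x\<in>ring_units. \<pi> x)" if "y \<in> ring_units" for y
    unfolding n_def using stationary_U_at_unit[OF assms(3) that] .
  have "n > 0" unfolding n_def by (simp add: finite_UNIV_card_ge_0)
  then have "\<pi> y = \<pi> u" if "y \<in> ring_units" for y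
    using n_pi[OF that] n_pi[OF assms(4)] by (metis mult_cancel_left less_irrefl)
  then have "(\<Sum>x\<in>ring_units. \<pi> x) = m * \<pi> u" unfolding m_def by simp
  then have "\<pi> u * (n - m + m * \<alpha>) = \<alpha>"
    using n_pi[OF assms(4)] by (simp add: algebra_simps)
  moreover have "1 \<le> m" "m \<le> n"
    using one_in_ring_units unfolding m_def n_def
    by (auto simp: Suc_le_eq card_gt_0_iff card_mono)
  \<comment> \<open>positivity of the denominator needs only \<open>0 < \<alpha>\<close>\<close>
  then have "n - m + m * \<alpha> > 0" using assms(1) by (smt (verit) mult_pos_pos)
  ultimately show ?thesis unfolding n_def m_def by (simp add: field_simps)
qed

end
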